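(* Let $A \subset C(X)$ be a uniform algebra, let $\theta : A \to M_n(\mathbb{C})$ be a continuous unital homomorphism, and let $\alpha : A \to A$ be an antilinear contraction. Define a linear map $\theta_\alpha : A \to M_n(\mathbb{C})$ by $$\theta_\alpha(f) := \tfrac12\bigl(\theta(f) + \theta(\alpha(f))^*\bigr)\quad (f \in A).$$ If $\|\theta_\alpha\| \le 1$, then $\|\theta\| \le 1+\sqrt2$. Moreover, the constant $1+\sqrt2$ is sharp: it cannot be replaced by any smaller constant in this statement (valid for all uniform algebras $A$, all $n$, all such $\theta$ and $\alpha$).
   Context: A uniform algebra is a norm-closed subalgebra $A$ of $C(X)$, for $X$ a compact Hausdorff space, that contains the constant functions. It carries the supremum norm. $M_n(\mathbb{C})$ carries the operator norm, and $\|\cdot\|$ of a linear map is its operator norm. Homomorphisms are unital. A map $\alpha$ is antilinear if $\alpha(\lambda f + g) = \overline{\lambda}\alpha(f) + \alpha(g)$. It is a contraction if $\|\alpha(f)\| \le \|f\|$ for all $f$. *)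

theory Defs
  imports "HOL-Analysis.Analysis" "Jordan_Normal_Form.Schur_Decomposition"
begin

text \<open>Elements of C(X) are represented as functions on the ambient type that vanish off X.\<close>

definition supnorm :: "'a set \<Rightarrow> ('a \<Rightarrow> complex) \<Rightarrow> real" where
  "supnorm X f = (if X = {} then 0 else Sup ((\<lambda>x. cmod (f x)) ` X))"

definition const_on :: "'a set \<Rightarrow> complex \<Rightarrow> ('a \<Rightarrow> complex)" where
  "const_on X c = (\<lambda>x. if x \<in> X then c else 0)"

text \<open>A uniform algebra: a sup-norm closed subalgebra of C(X), X compact Hausdorff
  (Hausdorff comes from the type class), containing the constants.\<close>
definition uniform_algebra :: "'a::t2_space set \<Rightarrow> ('a \<Rightarrow> complex) set \<Rightarrow> bool" where
  "uniform_algebra X A \<longleftrightarrow>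
     compact X \<and>
     (\<forall>f\<in>A. continuous_on X f \<and> (\<forall>x. x \<notin> X \<longrightarrow> f x = 0)) \<and>
     (\<forall>c. const_on X c \<in> A) \<and>
     (\<forall>f\<in>A. \<forall>g\<in>A. (\<lambda>x. f x + g x) \<in> A) \<and>
     (\<forall>f\<in>A. \<forall>g\<in>A. (\<lambda>x. f x * g x) \<in> A) \<and>
     (\<forall>c. \<forall>f\<in>A. (\<lambda>x. c * f x) \<in> A) \<and>
     (\<forall>F g. (\<forall>k. F k \<in> A) \<and> continuous_on X g \<and> (\<forall>x. x \<notin> X \<longrightarrow> g x = 0) \<and>
        (\<lambda>k. supnorm X (\<lambda>x. F k x - g x)) \<longlonglongrightarrow> 0 \<longrightarrow> g \<in> A)"

definition cvec_norm :: "complex vec \<Rightarrow> real" where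
  "cvec_norm v = sqrt (\<Sum>i<dim_vec v. (cmod (v $ i))\<^sup>2)"

definition mat_opnorm :: "complex mat \<Rightarrow> real" where
  "mat_opnorm M = Sup {cvec_norm (M *\<^sub>v v) | v. v \<in> carrier_vec (dim_col M) \<and> cvec_norm v \<le> 1}"

definition map_norm :: "'a set \<Rightarrow> ('a \<Rightarrow> complex) set \<Rightarrow> (('a \<Rightarrow> complex) \<Rightarrow> complex mat) \<Rightarrow> real" where
  "map_norm X A T = Sup {mat_opnorm (T f) | f. f \<in> A \<and> supnorm X f \<le> 1}"

definition is_linear_map :: "('a \<Rightarrow> complex) set \<Rightarrow> nat \<Rightarrow> (('a \<Rightarrow> complex) \<Rightarrow> complex mat) \<Rightarrow> bool" where
  "is_linear_map A n T \<longleftrightarrow> (\<forall>f\<in>A. T f \<in> carrier_mat n n) \<and>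
     (\<forall>c. \<forall>f\<in>A. \<forall>g\<in>A. T (\<lambda>x. c * f x + g x) = c \<cdot>\<^sub>m T f + T g)"

definition is_unital_hom :: "'a set \<Rightarrow> ('a \<Rightarrow> complex) set \<Rightarrow> nat \<Rightarrow> (('a \<Rightarrow> complex) \<Rightarrow> complex mat) \<Rightarrow> bool" where
  "is_unital_hom X A n T \<longleftrightarrow> is_linear_map A n T \<and>
     (\<forall>f\<in>A. \<forall>g\<in>A. T (\<lambda>x. f x * g x) = T f * T g) \<and>
     T (const_on X 1) = 1\<^sub>m n"

definition is_continuous_map :: "'a set \<Rightarrow> ('a \<Rightarrow> complex) set \<Rightarrow> (('a \<Rightarrow> complex) \<Rightarrow> complex mat) \<Rightarrow> bool" where
  "is_continuous_map X A T \<longleftrightarrow> (\<forall>f\<in>A. \<forall>F. (\<forall>k. F k \<in> A) \<and>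
      (\<lambda>k. supnorm X (\<lambda>x. F k x - f x)) \<longlonglongrightarrow> 0 \<longrightarrow>
      (\<lambda>k. mat_opnorm (T (F k) - T f)) \<longlonglongrightarrow> 0)"

definition antilinear_contraction :: "'a set \<Rightarrow> ('a \<Rightarrow> complex) set \<Rightarrow> (('a \<Rightarrow> complex) \<Rightarrow> ('a \<Rightarrow> complex)) \<Rightarrow> bool" where
  "antilinear_contraction X A \<alpha> \<longleftrightarrow> (\<forall>f\<in>A. \<alpha> f \<in> A) \<and>
     (\<forall>c. \<forall>f\<in>A. \<forall>g\<in>A. \<alpha> (\<lambda>x. c * f x + g x) = (\<lambda>x. cnj c * \<alpha> f x + \<alpha> g x)) \<and>
     (\<forall>f\<in>A. supnorm X (\<alpha> f) \<le> supnorm X f)"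

definition theta_alpha :: "(('a \<Rightarrow> complex) \<Rightarrow> complex mat) \<Rightarrow> (('a \<Rightarrow> complex) \<Rightarrow> ('a \<Rightarrow> complex)) \<Rightarrow> ('a \<Rightarrow> complex) \<Rightarrow> complex mat" where
  "theta_alpha T \<alpha> f = (1/2) \<cdot>\<^sub>m (T f + mat_adjoint (T (\<alpha> f)))"

end

theory Submission
  imports Defs
begin

text \<open>Let \<open>M = \<parallel>\<theta>\<parallel>\<close>, which is finite because \<open>\<theta>\<close> is continuous. For \<open>f\<close> in the unit ball put
  \<open>T = \<theta>(f)\<close> and \<open>G = \<theta>(\<alpha> f)\<close>. Then \<open>T + G\<^sup>* = 2 \<theta>\<^sub>\<alpha>(f)\<close> has norm at most 2, and
  \<open>TGT = \<theta>(f \<cdot> \<alpha> f \<cdot> f)\<close> has norm at most \<open>M\<close> because \<open>f \<cdot> \<alpha> f \<cdot> f\<close> again lies in the unit ball.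
  Writing \<open>T\<^sup>*T T\<^sup>*T = T\<^sup>*T (T + G\<^sup>*)\<^sup>* T - T\<^sup>*(TGT)\<close> and using \<open>\<parallel>T\<parallel>\<^sup>4 \<le> \<parallel>T\<^sup>*T T\<^sup>*T\<parallel>\<close> gives
  \<open>\<parallel>T\<parallel>\<^sup>4 \<le> 2M\<^sup>3 + M\<^sup>2\<close>, hence \<open>M\<^sup>4 \<le> 2M\<^sup>3 + M\<^sup>2\<close>, i.e. \<open>(M - 1)\<^sup>2 \<le> 2\<close>.

  For sharpness take the algebra of all functions on two points \<open>a \<noteq> b\<close>,
  \<open>\<theta>(f) = [[f a, f a - f b], [0, f b]]\<close> and \<open>\<alpha>(f) = -f\<^sup>*\<close>. Then \<open>\<theta>\<^sub>\<alpha>(f)\<close> is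
  \<open>(f a - f b)/2\<close> times a rotation, of norm at most 1, while \<open>\<theta>\<close> maps the function with values
  \<open>1, -1\<close> to \<open>[[1, 2], [0, -1]]\<close>, whose norm is \<open>1 + \<surd>2\<close>.\<close>

no_notation vec_nth (infixl \<open>$\<close> 90)

section \<open>The Euclidean norm on complex vectors\<close>

lemma cvec_norm_eq_L2_set: "cvec_norm v = L2_set (\<lambda>i. cmod (v $ i)) {..<dim_vec v}"
  by (simp add: cvec_norm_def L2_set_def)

lemma cvec_norm_nonneg [simp]: "0 \<le> cvec_norm v"
  by (simp add: cvec_norm_eq_L2_set)

lemma cvec_norm_eq_0D: "cvec_norm v = 0 \<Longrightarrow> v = 0\<^sub>v (dim_vec v)"
  by (intro eq_vecI) (auto simp: cvec_norm_eq_L2_set L2_set_eq_0_iff)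

lemma cvec_norm_smult [simp]: "cvec_norm (c \<cdot>\<^sub>v v) = cmod c * cvec_norm v"
proof -
  have "(\<Sum>i<dim_vec v. (cmod ((c \<cdot>\<^sub>v v) $ i))\<^sup>2) = (cmod c)\<^sup>2 * (\<Sum>i<dim_vec v. (cmod (v $ i))\<^sup>2)"
    by (simp add: sum_distrib_left norm_mult power_mult_distrib)
  then show ?thesis by (simp add: cvec_norm_def real_sqrt_mult)
qed

lemma cvec_norm_add_le:
  assumes "u \<in> carrier_vec n" "w \<in> carrier_vec n"
  shows "cvec_norm (u + w) \<le> cvec_norm u + cvec_norm w"
proof -
  have "cvec_norm (u + w) \<le> L2_set (\<lambda>i. cmod (u $ i) + cmod (w $ i)) {..<n}"
    using assms by (auto simp: cvec_norm_eq_L2_set intro!: L2_set_mono norm_triangle_ineq)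
  also have "\<dots> \<le> cvec_norm u + cvec_norm w"
    using assms L2_set_triangle_ineq by (simp add: cvec_norm_eq_L2_set)
  finally show ?thesis .
qed

lemma cscalar_prod_self: "v \<bullet>c v = complex_of_real ((cvec_norm v)\<^sup>2)"
proof -
  have "v \<bullet>c v = (\<Sum>i<dim_vec v. complex_of_real ((cmod (v $ i))\<^sup>2))"
    by (simp add: scalar_prod_def lessThan_atLeast0 complex_norm_square[symmetric])
  then show ?thesis by (simp add: cvec_norm_def sum_nonneg)
qed

lemma cvec_norm_sq_eq_cmod: "(cvec_norm v)\<^sup>2 = cmod (v \<bullet>c v)"
  unfolding cscalar_prod_self norm_of_real by simp

lemma cmod_cscalar_prod_le:
  assumes "u \<in> carrier_vec n" "w \<in> carrier_vec n"
  shows "cmod (u \<bullet>c w) \<le> cvec_norm u * cvec_norm w"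
proof -
  have "cmod (u \<bullet>c w) \<le> (\<Sum>i<n. cmod (u $ i * cnj (w $ i)))"
    using assms norm_sum by (simp add: scalar_prod_def lessThan_atLeast0)
  also have "\<dots> = (\<Sum>i<n. \<bar>cmod (u $ i)\<bar> * \<bar>cmod (w $ i)\<bar>)"
    by (simp add: norm_mult)
  also have "\<dots> \<le> L2_set (\<lambda>i. cmod (u $ i)) {..<n} * L2_set (\<lambda>i. cmod (w $ i)) {..<n}"
    by (rule L2_set_mult_ineq)
  also have "\<dots> = cvec_norm u * cvec_norm w"
    using assms by (simp add: cvec_norm_eq_L2_set)
  finally show ?thesis .
qed

lemma cmod_vec_index_le_cvec_norm: "i < dim_vec v \<Longrightarrow> cmod (v $ i) \<le> cvec_norm v"
  using member_le_L2_set[of "{..<dim_vec v}" i "\<lambda>i. cmod (v $ i)"] by (simp add: cvec_norm_eq_L2_set)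

lemma cvec_norm_dim2: "v \<in> carrier_vec 2 \<Longrightarrow> cvec_norm v = sqrt ((cmod (v $ 0))\<^sup>2 + (cmod (v $ 1))\<^sup>2)"
  by (simp add: cvec_norm_def numeral_2_eq_2)

section \<open>The operator norm\<close>

lemma cvec_norm_mult_mat_vec_le_entry_sum:
  assumes M: "M \<in> carrier_mat n m" and v: "v \<in> carrier_vec m"
  shows "cvec_norm (M *\<^sub>v v) \<le> (\<Sum>i<n. \<Sum>j<m. cmod (M $$ (i,j))) * cvec_norm v"
proof -
  have "cvec_norm (M *\<^sub>v v) = L2_set (\<lambda>i. cmod ((M *\<^sub>v v) $ i)) {..<n}"
    using M by (simp add: cvec_norm_eq_L2_set)
  also have "\<dots> \<le> (\<Sum>i<n. \<bar>cmod ((M *\<^sub>v v) $ i)\<bar>)"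
    by (rule L2_set_le_sum_abs)
  also have "\<dots> \<le> (\<Sum>i<n. \<Sum>j<m. cmod (M $$ (i,j)) * cvec_norm v)"
  proof (rule sum_mono)
    fix i assume "i \<in> {..<n}"
    then have "cmod ((M *\<^sub>v v) $ i) \<le> (\<Sum>j<m. cmod (M $$ (i,j) * v $ j))"
      using M v norm_sum by (simp add: scalar_prod_def lessThan_atLeast0)
    also have "\<dots> \<le> (\<Sum>j<m. cmod (M $$ (i,j)) * cvec_norm v)"
      using v by (auto simp: norm_mult intro!: sum_mono mult_left_mono cmod_vec_index_le_cvec_norm)
    finally show "\<bar>cmod ((M *\<^sub>v v) $ i)\<bar> \<le> (\<Sum>j<m. cmod (M $$ (i,j)) * cvec_norm v)"
      by simp
  qed
  finally show ?thesis by (simp add: sum_distrib_right)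
qed

lemma bdd_above_mat_opnorm:
  "bdd_above {cvec_norm (M *\<^sub>v v) | v. v \<in> carrier_vec (dim_col M) \<and> cvec_norm v \<le> 1}"
proof (rule bdd_aboveI)
  let ?B = "\<Sum>i<dim_row M. \<Sum>j<dim_col M. cmod (M $$ (i,j))"
  fix x assume "x \<in> {cvec_norm (M *\<^sub>v v) | v. v \<in> carrier_vec (dim_col M) \<and> cvec_norm v \<le> 1}"
  then obtain v where v: "v \<in> carrier_vec (dim_col M)" "cvec_norm v \<le> 1" and x: "x = cvec_norm (M *\<^sub>v v)"
    by blast
  have "x \<le> ?B * cvec_norm v"
    unfolding x by (rule cvec_norm_mult_mat_vec_le_entry_sum[OF _ v(1)]) auto
  also have "\<dots> \<le> ?B"
    using v(2) by (simp add: mult_left_le sum_nonneg)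
  finally show "x \<le> ?B" .
qed

lemma cvec_norm_mult_mat_vec_le_opnorm_unit:
  "v \<in> carrier_vec (dim_col M) \<Longrightarrow> cvec_norm v \<le> 1 \<Longrightarrow> cvec_norm (M *\<^sub>v v) \<le> mat_opnorm M"
  unfolding mat_opnorm_def by (rule cSup_upper[OF _ bdd_above_mat_opnorm]) blast

lemma mat_opnorm_nonneg [simp]: "0 \<le> mat_opnorm M"
  using cvec_norm_mult_mat_vec_le_opnorm_unit[of "0\<^sub>v (dim_col M)" M]
  by (simp add: cvec_norm_def)

lemma cvec_norm_mult_mat_vec_le:
  assumes v: "v \<in> carrier_vec (dim_col M)"
  shows "cvec_norm (M *\<^sub>v v) \<le> mat_opnorm M * cvec_norm v"
proof (cases "cvec_norm v = 0")
  case True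
  then have "v = 0\<^sub>v (dim_col M)" using v cvec_norm_eq_0D by fastforce
  then show ?thesis by (simp add: cvec_norm_def)
next
  case False
  let ?w = "complex_of_real (1 / cvec_norm v) \<cdot>\<^sub>v v"
  have "M *\<^sub>v ?w = complex_of_real (1 / cvec_norm v) \<cdot>\<^sub>v (M *\<^sub>v v)"
    using v by (intro mult_mat_vec[of M "dim_row M" "dim_col M"]) auto
  moreover have "cvec_norm (M *\<^sub>v ?w) \<le> mat_opnorm M"
    using v False by (intro cvec_norm_mult_mat_vec_le_opnorm_unit) (auto simp: norm_divide)
  moreover have "0 < cvec_norm v"
    using False cvec_norm_nonneg[of v] by linarith
  ultimately show ?thesis
    by (simp add: norm_divide pos_divide_le_eq mult.commute)
qed

lemma mat_opnorm_le_unit: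
  assumes "\<And>v. v \<in> carrier_vec (dim_col M) \<Longrightarrow> cvec_norm v \<le> 1 \<Longrightarrow> cvec_norm (M *\<^sub>v v) \<le> c"
  shows "mat_opnorm M \<le> c"
  unfolding mat_opnorm_def
proof (rule cSup_least)
  show "{cvec_norm (M *\<^sub>v v) | v. v \<in> carrier_vec (dim_col M) \<and> cvec_norm v \<le> 1} \<noteq> {}"
    by (auto simp: cvec_norm_def intro!: exI[of _ "0\<^sub>v (dim_col M)"])
qed (use assms in blast)

lemma mat_opnorm_le:
  assumes "0 \<le> c" "\<And>v. v \<in> carrier_vec (dim_col M) \<Longrightarrow> cvec_norm (M *\<^sub>v v) \<le> c * cvec_norm v"
  shows "mat_opnorm M \<le> c"
proof (rule mat_opnorm_le_unit)
  fix v :: "complex vec" assume "v \<in> carrier_vec (dim_col M)" "cvec_norm v \<le> 1"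
  then show "cvec_norm (M *\<^sub>v v) \<le> c"
    using assms mult_left_le[of "cvec_norm v" c] by (meson order_trans)
qed

lemma mat_opnorm_add_le:
  assumes "A \<in> carrier_mat n m" "B \<in> carrier_mat n m"
  shows "mat_opnorm (A + B) \<le> mat_opnorm A + mat_opnorm B"
proof (rule mat_opnorm_le)
  fix v :: "complex vec" assume "v \<in> carrier_vec (dim_col (A + B))"
  then have v: "v \<in> carrier_vec m" using assms by simp
  have "cvec_norm ((A + B) *\<^sub>v v) \<le> cvec_norm (A *\<^sub>v v) + cvec_norm (B *\<^sub>v v)"
    using assms v by (simp add: add_mult_distrib_mat_vec cvec_norm_add_le[of _ n])
  also have "\<dots> \<le> mat_opnorm A * cvec_norm v + mat_opnorm B * cvec_norm v"
    using assms v by (intro add_mono cvec_norm_mult_mat_vec_le) auto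
  finally show "cvec_norm ((A + B) *\<^sub>v v) \<le> (mat_opnorm A + mat_opnorm B) * cvec_norm v"
    by (simp add: distrib_right)
qed simp

lemma mat_opnorm_mult_le:
  assumes A: "A \<in> carrier_mat n m" and B: "B \<in> carrier_mat m k"
  shows "mat_opnorm (A * B) \<le> mat_opnorm A * mat_opnorm B"
proof (rule mat_opnorm_le)
  fix v :: "complex vec" assume "v \<in> carrier_vec (dim_col (A * B))"
  then have v: "v \<in> carrier_vec k" using B by simp
  have "cvec_norm ((A * B) *\<^sub>v v) = cvec_norm (A *\<^sub>v (B *\<^sub>v v))"
    using A B v by (simp add: assoc_mult_mat_vec)
  also have "\<dots> \<le> mat_opnorm A * cvec_norm (B *\<^sub>v v)"
    using A B v by (intro cvec_norm_mult_mat_vec_le) simp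
  also have "\<dots> \<le> mat_opnorm A * (mat_opnorm B * cvec_norm v)"
    using B v by (intro mult_left_mono cvec_norm_mult_mat_vec_le) auto
  finally show "cvec_norm ((A * B) *\<^sub>v v) \<le> mat_opnorm A * mat_opnorm B * cvec_norm v"
    by (simp add: mult.assoc)
qed simp

lemma smult_mat_mult_mat_vec:
  assumes "A \<in> carrier_mat n m" "v \<in> carrier_vec m"
  shows "(c \<cdot>\<^sub>m A) *\<^sub>v v = c \<cdot>\<^sub>v (A *\<^sub>v v)"
  using assms by (intro eq_vecI) (auto simp: scalar_prod_def sum_distrib_left mult.assoc)

lemma mat_opnorm_smult_le:
  assumes "A \<in> carrier_mat n m"
  shows "mat_opnorm (c \<cdot>\<^sub>m A) \<le> cmod c * mat_opnorm A"
proof (rule mat_opnorm_le)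
  fix v :: "complex vec" assume "v \<in> carrier_vec (dim_col (c \<cdot>\<^sub>m A))"
  then have v: "v \<in> carrier_vec m" using assms by simp
  then show "cvec_norm ((c \<cdot>\<^sub>m A) *\<^sub>v v) \<le> cmod c * mat_opnorm A * cvec_norm v"
    using assms cvec_norm_mult_mat_vec_le[of v A]
    by (simp add: smult_mat_mult_mat_vec mult.assoc mult_left_mono)
qed simp

lemma mat_opnorm_smult:
  assumes "A \<in> carrier_mat n m"
  shows "mat_opnorm (c \<cdot>\<^sub>m A) = cmod c * mat_opnorm A"
proof (cases "c = 0")
  case True
  then show ?thesis
    using mat_opnorm_smult_le[OF assms, of 0] mat_opnorm_nonneg[of "0 \<cdot>\<^sub>m A"] by simp
next
  case False
  have "A = inverse c \<cdot>\<^sub>m (c \<cdot>\<^sub>m A)"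
    using False by (intro eq_matI) auto
  then have "mat_opnorm A \<le> cmod (inverse c) * mat_opnorm (c \<cdot>\<^sub>m A)"
    using mat_opnorm_smult_le[of "c \<cdot>\<^sub>m A" n m "inverse c"] assms by simp
  then have "cmod c * mat_opnorm A \<le> mat_opnorm (c \<cdot>\<^sub>m A)"
    using False by (simp add: norm_divide field_simps)
  then show ?thesis
    using mat_opnorm_smult_le[OF assms, of c] by simp
qed

lemma mat_opnorm_diff_le:
  assumes "A \<in> carrier_mat n m" "B \<in> carrier_mat n m"
  shows "mat_opnorm (A - B) \<le> mat_opnorm A + mat_opnorm B"
proof -
  have "A - B = A + (-1) \<cdot>\<^sub>m B"
    using assms by (intro eq_matI) auto
  then show ?thesis
    using mat_opnorm_add_le[of A n m "(-1) \<cdot>\<^sub>m B"] mat_opnorm_smult[of B n m "-1"] assms by simp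
qed

lemma dim_row_mat_adjoint [simp]: "dim_row (mat_adjoint A) = dim_col A"
  and dim_col_mat_adjoint [simp]: "dim_col (mat_adjoint A) = dim_row A"
  by (simp_all add: mat_adjoint_def mat_of_rows_def)

lemma mat_adjoint_index [simp]:
  "i < dim_col A \<Longrightarrow> j < dim_row A \<Longrightarrow> mat_adjoint A $$ (i,j) = cnj (A $$ (j,i))"
  by (simp add: mat_adjoint_def mat_of_rows_def)

lemma mat_adjoint_carrier: "A \<in> carrier_mat n m \<Longrightarrow> mat_adjoint A \<in> carrier_mat m n"
  by (intro carrier_matI) auto

lemma mat_adjoint_adjoint: "mat_adjoint (mat_adjoint A) = (A :: complex mat)"
  by (intro eq_matI) auto

lemma mat_adjoint_add:
  fixes A B :: "complex mat"
  assumes "A \<in> carrier_mat n m" "B \<in> carrier_mat n m"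
  shows "mat_adjoint (A + B) = mat_adjoint A + mat_adjoint B"
  using assms by (intro eq_matI) simp_all

lemma mat_adjoint_mult:
  fixes A B :: "complex mat"
  assumes "A \<in> carrier_mat n m" "B \<in> carrier_mat m k"
  shows "mat_adjoint (A * B) = mat_adjoint B * mat_adjoint A"
  using assms by (intro eq_matI) (simp_all add: scalar_prod_def mult.commute)

lemma mat_adjoint_cscalar_prod:
  fixes A :: "complex mat"
  assumes A: "A \<in> carrier_mat n m" and u: "u \<in> carrier_vec m" and w: "w \<in> carrier_vec n"
  shows "(A *\<^sub>v u) \<bullet>c w = u \<bullet>c (mat_adjoint A *\<^sub>v w)"
proof -
  have "(A *\<^sub>v u) \<bullet>c w = (\<Sum>i<n. \<Sum>j<m. A $$ (i,j) * u $ j * cnj (w $ i))"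
    using A u w by (simp add: scalar_prod_def lessThan_atLeast0 sum_distrib_right)
  also have "\<dots> = (\<Sum>j<m. \<Sum>i<n. A $$ (i,j) * u $ j * cnj (w $ i))"
    by (rule sum.swap)
  also have "\<dots> = u \<bullet>c (mat_adjoint A *\<^sub>v w)"
    using A u w
    by (auto simp: scalar_prod_def lessThan_atLeast0 sum_distrib_left ac_simps intro!: sum.cong)
  finally show ?thesis .
qed

lemma mat_opnorm_adjoint_le:
  fixes A :: "complex mat"
  assumes A: "A \<in> carrier_mat n m"
  shows "mat_opnorm (mat_adjoint A) \<le> mat_opnorm A"
proof (rule mat_opnorm_le)
  fix w :: "complex vec" assume "w \<in> carrier_vec (dim_col (mat_adjoint A))"
  then have w: "w \<in> carrier_vec n" using A by simp
  define z where "z = mat_adjoint A *\<^sub>v w"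
  have z: "z \<in> carrier_vec m" unfolding z_def using mat_adjoint_carrier[OF A] w by simp
  have "(cvec_norm z)\<^sup>2 = cmod ((A *\<^sub>v z) \<bullet>c w)"
    unfolding cvec_norm_sq_eq_cmod mat_adjoint_cscalar_prod[OF A z w] unfolding z_def ..
  also have "\<dots> \<le> cvec_norm (A *\<^sub>v z) * cvec_norm w"
    using A w z by (intro cmod_cscalar_prod_le) auto
  also have "\<dots> \<le> mat_opnorm A * cvec_norm z * cvec_norm w"
    using A z by (intro mult_right_mono cvec_norm_mult_mat_vec_le) auto
  finally have "cvec_norm z * cvec_norm z \<le> (mat_opnorm A * cvec_norm w) * cvec_norm z"
    by (simp add: power2_eq_square mult_ac)
  then have "cvec_norm z \<le> mat_opnorm A * cvec_norm w"
    by (cases "cvec_norm z = 0") (auto simp: less_le intro: mult_right_le_imp_le)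
  then show "cvec_norm (mat_adjoint A *\<^sub>v w) \<le> mat_opnorm A * cvec_norm w"
    unfolding z_def .
qed simp

lemma mat_opnorm_adjoint:
  assumes "A \<in> carrier_mat n m"
  shows "mat_opnorm (mat_adjoint A) = mat_opnorm A"
  using mat_opnorm_adjoint_le[OF assms] mat_opnorm_adjoint_le[OF mat_adjoint_carrier[OF assms]]
  by (simp add: mat_adjoint_adjoint)

section \<open>The C*-inequality and the key estimate\<close>

lemma cvec_norm_mult_mat_vec_sq_le:
  assumes A: "A \<in> carrier_mat n m" and v: "v \<in> carrier_vec m"
  shows "(cvec_norm (A *\<^sub>v v))\<^sup>2 \<le> cvec_norm v * cvec_norm (mat_adjoint A *\<^sub>v (A *\<^sub>v v))"
proof -
  have "(cvec_norm (A *\<^sub>v v))\<^sup>2 = cmod (v \<bullet>c (mat_adjoint A *\<^sub>v (A *\<^sub>v v)))"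
    unfolding cvec_norm_sq_eq_cmod using A v by (simp add: mat_adjoint_cscalar_prod[of A n m])
  also have "\<dots> \<le> cvec_norm v * cvec_norm (mat_adjoint A *\<^sub>v (A *\<^sub>v v))"
    using A v mat_adjoint_carrier[OF A] by (intro cmod_cscalar_prod_le[of _ m]) auto
  finally show ?thesis .
qed

lemma mat_opnorm_sq_le:
  assumes A: "A \<in> carrier_mat n m"
  shows "(mat_opnorm A)\<^sup>2 \<le> mat_opnorm (mat_adjoint A * A)"
proof -
  have AHA: "mat_adjoint A * A \<in> carrier_mat m m"
    using A mat_adjoint_carrier[OF A] by simp
  have "mat_opnorm A \<le> sqrt (mat_opnorm (mat_adjoint A * A))"
  proof (rule mat_opnorm_le_unit)
    fix v :: "complex vec" assume "v \<in> carrier_vec (dim_col A)" and v1: "cvec_norm v \<le> 1"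
    then have v: "v \<in> carrier_vec m" using A by simp
    have "(cvec_norm (A *\<^sub>v v))\<^sup>2 \<le> cvec_norm v * cvec_norm ((mat_adjoint A * A) *\<^sub>v v)"
      using cvec_norm_mult_mat_vec_sq_le[OF A v] A v mat_adjoint_carrier[OF A]
      by (simp add: assoc_mult_mat_vec[of _ m n])
    also have "\<dots> \<le> 1 * mat_opnorm (mat_adjoint A * A)"
      using AHA v v1 by (intro mult_mono cvec_norm_mult_mat_vec_le_opnorm_unit) auto
    finally show "cvec_norm (A *\<^sub>v v) \<le> sqrt (mat_opnorm (mat_adjoint A * A))"
      by (simp add: real_le_rsqrt)
  qed
  then show ?thesis
    by (metis mat_opnorm_nonneg power_mono real_sqrt_pow2)
qed

lemma mat_opnorm_pow4_le:
  assumes A: "A \<in> carrier_mat n m"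
  shows "mat_opnorm A ^ 4 \<le> mat_opnorm (mat_adjoint A * A * (mat_adjoint A * A))"
proof -
  have AH: "mat_adjoint A \<in> carrier_mat m n" by (rule mat_adjoint_carrier[OF A])
  have AHA: "mat_adjoint A * A \<in> carrier_mat m m" using A AH by simp
  have "mat_opnorm A ^ 4 = ((mat_opnorm A)\<^sup>2)\<^sup>2" by simp
  also have "\<dots> \<le> (mat_opnorm (mat_adjoint A * A))\<^sup>2"
    by (intro power_mono mat_opnorm_sq_le[OF A]) simp
  also have "\<dots> \<le> mat_opnorm (mat_adjoint (mat_adjoint A * A) * (mat_adjoint A * A))"
    by (rule mat_opnorm_sq_le[OF AHA])
  also have "mat_adjoint (mat_adjoint A * A) = mat_adjoint A * A"
    using A AH by (simp add: mat_adjoint_mult[of _ m n] mat_adjoint_adjoint)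
  finally show ?thesis .
qed

lemma adjoint_square_eq:
  fixes T G :: "complex mat"
  assumes T: "T \<in> carrier_mat n n" and G: "G \<in> carrier_mat n n"
  shows "mat_adjoint T * T * (mat_adjoint T * T)
    = mat_adjoint T * T * (mat_adjoint (T + mat_adjoint G) * T) - mat_adjoint T * (T * G * T)"
proof -
  define TH where "TH = mat_adjoint T"
  have TH: "TH \<in> carrier_mat n n" unfolding TH_def by (rule mat_adjoint_carrier[OF T])
  have "mat_adjoint (T + mat_adjoint G) = TH + G"
    unfolding TH_def using T G mat_adjoint_carrier[OF G]
    by (simp add: mat_adjoint_add mat_adjoint_adjoint)
  then have "TH * T * (mat_adjoint (T + mat_adjoint G) * T) = TH * T * (TH * T + G * T)"
    using T TH G by (simp add: add_mult_distrib_mat)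
  also have "\<dots> = TH * T * (TH * T) + TH * T * (G * T)"
    using T TH G by (intro mult_add_distrib_mat[of _ n n]) auto
  also have "TH * T * (G * T) = TH * (T * G * T)"
    using T TH G by (simp add: assoc_mult_mat[of TH n n T n "G * T" n] assoc_mult_mat[of T n n G n T n])
  finally have sum: "TH * T * (mat_adjoint (T + mat_adjoint G) * T) = TH * T * (TH * T) + TH * (T * G * T)" .
  have cancel: "B = (B + C) - C" if "B \<in> carrier_mat n n" "C \<in> carrier_mat n n" for B C :: "complex mat"
    using that by (intro eq_matI) auto
  show ?thesis
    unfolding TH_def[symmetric] sum using T TH G by (intro cancel) auto
qed

lemma mat_opnorm_pow4_le_sym:
  assumes T: "T \<in> carrier_mat n n" and G: "G \<in> carrier_mat n n"
  shows "mat_opnorm T ^ 4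
    \<le> mat_opnorm T ^ 3 * mat_opnorm (T + mat_adjoint G) + mat_opnorm T * mat_opnorm (T * G * T)"
proof -
  define TH where "TH = mat_adjoint T"
  define SH where "SH = mat_adjoint (T + mat_adjoint G)"
  have TH: "TH \<in> carrier_mat n n" unfolding TH_def by (rule mat_adjoint_carrier[OF T])
  have S: "T + mat_adjoint G \<in> carrier_mat n n" using T mat_adjoint_carrier[OF G] by simp
  have SH: "SH \<in> carrier_mat n n" unfolding SH_def by (rule mat_adjoint_carrier[OF S])
  have "mat_opnorm (TH * T * (SH * T)) \<le> mat_opnorm (TH * T) * mat_opnorm (SH * T)"
    using T TH SH by (intro mat_opnorm_mult_le[of _ n n _ n]) auto
  also have "\<dots> \<le> (mat_opnorm TH * mat_opnorm T) * (mat_opnorm SH * mat_opnorm T)"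
    using T TH SH by (intro mult_mono mat_opnorm_mult_le[of _ n n _ n]) auto
  finally have first: "mat_opnorm (TH * T * (SH * T)) \<le> mat_opnorm T ^ 3 * mat_opnorm (T + mat_adjoint G)"
    unfolding TH_def SH_def using T S by (simp add: mat_opnorm_adjoint power3_eq_cube mult_ac)
  have second: "mat_opnorm (TH * (T * G * T)) \<le> mat_opnorm T * mat_opnorm (T * G * T)"
    using mat_opnorm_mult_le[of TH n n "T * G * T" n] T TH G
    unfolding TH_def by (simp add: mat_opnorm_adjoint)
  have "mat_opnorm T ^ 4 \<le> mat_opnorm (TH * T * (TH * T))"
    unfolding TH_def by (rule mat_opnorm_pow4_le[OF T])
  also have "TH * T * (TH * T) = TH * T * (SH * T) - TH * (T * G * T)"
    unfolding TH_def SH_def by (rule adjoint_square_eq[OF T G])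
  also have "mat_opnorm \<dots> \<le> mat_opnorm (TH * T * (SH * T)) + mat_opnorm (TH * (T * G * T))"
    using T TH G SH by (intro mat_opnorm_diff_le[of _ n n]) auto
  also have "\<dots> \<le> mat_opnorm T ^ 3 * mat_opnorm (T + mat_adjoint G) + mat_opnorm T * mat_opnorm (T * G * T)"
    using first second by (rule add_mono)
  finally show ?thesis .
qed

lemma norm_le_supnorm:
  "bdd_above ((\<lambda>x. cmod (f x)) ` X) \<Longrightarrow> x \<in> X \<Longrightarrow> cmod (f x) \<le> supnorm X f"
  unfolding supnorm_def by (auto intro: cSup_upper)

lemma supnorm_nonneg:
  assumes "bdd_above ((\<lambda>x. cmod (f x)) ` X)"
  shows "0 \<le> supnorm X f"
proof (cases "X = {}")
  case False
  then obtain x where "x \<in> X" by blast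
  then show ?thesis
    using norm_le_supnorm[OF assms] norm_ge_zero order_trans by blast
qed (simp add: supnorm_def)

lemma supnorm_le: "(\<And>x. x \<in> X \<Longrightarrow> cmod (f x) \<le> c) \<Longrightarrow> 0 \<le> c \<Longrightarrow> supnorm X f \<le> c"
  unfolding supnorm_def by (auto intro!: cSup_least)

lemma
  assumes "uniform_algebra X A"
  shows uniform_algebra_bdd_above_norm: "f \<in> A \<Longrightarrow> bdd_above ((\<lambda>x. cmod (f x)) ` X)"
    and uniform_algebra_zero: "(\<lambda>x. 0) \<in> A"
    and uniform_algebra_scale: "f \<in> A \<Longrightarrow> (\<lambda>x. c * f x) \<in> A"
    and uniform_algebra_mult: "f \<in> A \<Longrightarrow> g \<in> A \<Longrightarrow> (\<lambda>x. f x * g x) \<in> A"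
proof -
  show "bdd_above ((\<lambda>x. cmod (f x)) ` X)" if "f \<in> A"
    using assms that unfolding uniform_algebra_def
    by (metis bounded_imp_bdd_above compact_continuous_image compact_imp_bounded continuous_on_norm)
  have "const_on X 0 \<in> A"
    using assms unfolding uniform_algebra_def by blast
  moreover have "const_on X 0 = (\<lambda>x. 0)"
    by (simp add: const_on_def fun_eq_iff)
  ultimately show "(\<lambda>x. 0) \<in> A"
    by simp
qed (use assms in \<open>unfold uniform_algebra_def, blast+\<close>)

lemma uniform_algebra_norm_le_supnorm:
  "uniform_algebra X A \<Longrightarrow> f \<in> A \<Longrightarrow> x \<in> X \<Longrightarrow> cmod (f x) \<le> supnorm X f"
  by (rule norm_le_supnorm[OF uniform_algebra_bdd_above_norm])

lemma
  assumes "is_linear_map A n T"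
  shows is_linear_map_carrier: "f \<in> A \<Longrightarrow> T f \<in> carrier_mat n n"
    and is_linear_mapD: "f \<in> A \<Longrightarrow> g \<in> A \<Longrightarrow> T (\<lambda>x. c * f x + g x) = c \<cdot>\<^sub>m T f + T g"
  using assms unfolding is_linear_map_def by blast+

lemma linear_map_zero:
  assumes A: "uniform_algebra X A" and T: "is_linear_map A n T"
  shows "T (\<lambda>x. 0) = 0\<^sub>m n n"
proof -
  have z: "(\<lambda>x. 0) \<in> A" by (rule uniform_algebra_zero[OF A])
  have "T (\<lambda>x. 0) = T (\<lambda>x. (-1) * 0 + 0)" by simp
  also have "\<dots> = (-1) \<cdot>\<^sub>m T (\<lambda>x. 0) + T (\<lambda>x. 0)"
    by (rule is_linear_mapD[OF T z z])
  also have "\<dots> = 0\<^sub>m n n"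
    using is_linear_map_carrier[OF T z] by (intro eq_matI) auto
  finally show ?thesis .
qed

lemma linear_map_scale:
  assumes A: "uniform_algebra X A" and T: "is_linear_map A n T" and f: "f \<in> A"
  shows "T (\<lambda>x. c * f x) = c \<cdot>\<^sub>m T f"
  using is_linear_mapD[OF T f uniform_algebra_zero[OF A], of c] is_linear_map_carrier[OF T f]
  by (simp add: linear_map_zero[OF A T])

lemma is_continuous_mapD:
  assumes "is_continuous_map X A T" "f \<in> A" "\<And>k. F k \<in> A"
    "(\<lambda>k. supnorm X (\<lambda>x. F k x - f x)) \<longlonglongrightarrow> 0"
  shows "(\<lambda>k. mat_opnorm (T (F k) - T f)) \<longlonglongrightarrow> 0"
  using assms unfolding is_continuous_map_def by blast

lemma mat_opnorm_linear_map_scale: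
  assumes A: "uniform_algebra X A" and T: "is_linear_map A n T" and f: "f \<in> A"
  shows "mat_opnorm (T (\<lambda>x. c * f x)) = cmod c * mat_opnorm (T f)"
  unfolding linear_map_scale[OF A T f] by (rule mat_opnorm_smult[OF is_linear_map_carrier[OF T f]])

lemma supnorm_shrink_unit_ball_tendsto_zero:
  assumes A: "uniform_algebra X A" and F: "\<And>k. F k \<in> A" "\<And>k. supnorm X (F k) \<le> 1"
  shows "(\<lambda>k. supnorm X (\<lambda>x. complex_of_real (inverse (real (Suc k))) * F k x - 0)) \<longlonglongrightarrow> 0"
proof -
  have upper: "supnorm X (\<lambda>x. complex_of_real (inverse (real (Suc k))) * F k x - 0) \<le> inverse (real (Suc k))"
    for k
  proof (rule supnorm_le)
    fix x assume "x \<in> X"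
    then have "cmod (F k x) \<le> 1"
      using uniform_algebra_norm_le_supnorm[OF A F(1)] F(2) order_trans by blast
    then show "cmod (complex_of_real (inverse (real (Suc k))) * F k x - 0) \<le> inverse (real (Suc k))"
      unfolding diff_zero norm_mult norm_of_real by (simp add: mult_left_le)
  qed simp
  have lower: "0 \<le> supnorm X (\<lambda>x. complex_of_real (inverse (real (Suc k))) * F k x - 0)" for k
    using supnorm_nonneg[OF uniform_algebra_bdd_above_norm[OF A uniform_algebra_scale[OF A F(1)]]]
    by simp
  show ?thesis
    by (rule tendsto_sandwich[OF always_eventually always_eventually tendsto_const
          LIMSEQ_inverse_real_of_nat]) (use lower upper in auto)
qed

text \<open>If \<open>\<parallel>T f\<^sub>k\<parallel> > (k + 1)\<^sup>2\<close> on the unit ball, then \<open>f\<^sub>k / (k + 1) \<longrightarrow> 0\<close> while its image has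
  norm \<open>> k + 1\<close>.\<close>

lemma bdd_above_map_norm:
  assumes A: "uniform_algebra X A" and T: "is_linear_map A n T" and cont: "is_continuous_map X A T"
  shows "bdd_above {mat_opnorm (T f) | f. f \<in> A \<and> supnorm X f \<le> 1}"
proof (rule ccontr)
  assume unbounded: "\<not> ?thesis"
  have "\<exists>f. f \<in> A \<and> supnorm X f \<le> 1 \<and> (real (Suc k))\<^sup>2 < mat_opnorm (T f)" for k
  proof (rule ccontr)
    assume "\<not> ?thesis"
    then have "\<forall>y \<in> {mat_opnorm (T f) | f. f \<in> A \<and> supnorm X f \<le> 1}. y \<le> (real (Suc k))\<^sup>2"
      by (auto simp: not_less)
    then show False
      using unbounded unfolding bdd_above_def by blast
  qed
  then obtain F where F: "\<And>k. F k \<in> A" "\<And>k. supnorm X (F k) \<le> 1"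
    "\<And>k. (real (Suc k))\<^sup>2 < mat_opnorm (T (F k))"
    by metis
  define G where "G k = (\<lambda>x. complex_of_real (inverse (real (Suc k))) * F k x)" for k
  have G: "G k \<in> A" for k
    unfolding G_def by (rule uniform_algebra_scale[OF A F(1)])
  have "(\<lambda>k. supnorm X (\<lambda>x. G k x - 0)) \<longlonglongrightarrow> 0"
    unfolding G_def by (rule supnorm_shrink_unit_ball_tendsto_zero[OF A]) (use F in auto)
  then have "(\<lambda>k. mat_opnorm (T (G k) - T (\<lambda>x. 0))) \<longlonglongrightarrow> 0"
    by (rule is_continuous_mapD[OF cont uniform_algebra_zero[OF A] G])
  moreover have "T (G k) - T (\<lambda>x. 0) = T (G k)" for k
    unfolding linear_map_zero[OF A T] using is_linear_map_carrier[OF T G[of k]] by (intro eq_matI) auto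
  ultimately have "\<forall>\<^sub>F k in sequentially. mat_opnorm (T (G k)) < 1"
    by (simp add: order_tendstoD)
  then obtain k where k: "mat_opnorm (T (G k)) < 1"
    unfolding eventually_sequentially by blast
  have "real (Suc k) = inverse (real (Suc k)) * (real (Suc k))\<^sup>2"
    by (simp add: power2_eq_square)
  also have "\<dots> \<le> inverse (real (Suc k)) * mat_opnorm (T (F k))"
    using F(3)[of k] by (intro mult_left_mono) auto
  also have "\<dots> = mat_opnorm (T (G k))"
    unfolding G_def mat_opnorm_linear_map_scale[OF A T F(1)] norm_of_real by simp
  finally show False
    using k by simp
qed

lemma mat_opnorm_le_map_norm:
  assumes "bdd_above {mat_opnorm (T f) | f. f \<in> A \<and> supnorm X f \<le> 1}" "f \<in> A" "supnorm X f \<le> 1"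
  shows "mat_opnorm (T f) \<le> map_norm X A T"
  unfolding map_norm_def by (rule cSup_upper) (use assms in blast)+

lemma map_norm_le:
  assumes "uniform_algebra X A" "\<And>f. f \<in> A \<Longrightarrow> supnorm X f \<le> 1 \<Longrightarrow> mat_opnorm (T f) \<le> c"
  shows "map_norm X A T \<le> c"
  unfolding map_norm_def
proof (rule cSup_least)
  have "supnorm X (\<lambda>x. 0) \<le> 1" by (rule supnorm_le) auto
  then show "{mat_opnorm (T f) | f. f \<in> A \<and> supnorm X f \<le> 1} \<noteq> {}"
    using uniform_algebra_zero[OF assms(1)] by blast
qed (use assms(2) in blast)

lemma is_continuous_mapI_lipschitz:
  assumes "\<And>f g. f \<in> A \<Longrightarrow> g \<in> A \<Longrightarrow> mat_opnorm (T g - T f) \<le> C * supnorm X (\<lambda>x. g x - f x)"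
  shows "is_continuous_map X A T"
  unfolding is_continuous_map_def
proof (intro ballI allI impI)
  fix f F assume f: "f \<in> A" and "(\<forall>k. F k \<in> A) \<and> (\<lambda>k. supnorm X (\<lambda>x. F k x - f x)) \<longlonglongrightarrow> 0"
  then have FA: "\<And>k. F k \<in> A" and lim: "(\<lambda>k. supnorm X (\<lambda>x. F k x - f x)) \<longlonglongrightarrow> 0"
    by auto
  have upper: "\<forall>k. mat_opnorm (T (F k) - T f) \<le> C * supnorm X (\<lambda>x. F k x - f x)"
    using assms f FA by blast
  show "(\<lambda>k. mat_opnorm (T (F k) - T f)) \<longlonglongrightarrow> 0"
    by (rule tendsto_sandwich[OF always_eventually always_eventually tendsto_const
          tendsto_mult_right_zero[OF lim]]) (use upper in auto)
qed

section \<open>The bound on the norm of the homomorphism\<close>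

lemma uniform_algebra_supnorm_mult_le_one:
  assumes A: "uniform_algebra X A" and f: "f \<in> A" "supnorm X f \<le> 1" and g: "g \<in> A" "supnorm X g \<le> 1"
  shows "supnorm X (\<lambda>x. f x * g x) \<le> 1"
proof (rule supnorm_le)
  fix x assume "x \<in> X"
  then have "cmod (f x) \<le> 1" "cmod (g x) \<le> 1"
    using uniform_algebra_norm_le_supnorm[OF A] f g by (meson order_trans)+
  then show "cmod (f x * g x) \<le> 1"
    by (simp add: norm_mult mult_le_one)
qed simp

lemma
  assumes "antilinear_contraction X A \<alpha>" "f \<in> A"
  shows antilinear_contraction_closed: "\<alpha> f \<in> A"
    and antilinear_contraction_supnorm_le: "supnorm X (\<alpha> f) \<le> supnorm X f"
  using assms unfolding antilinear_contraction_def by blast+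

lemma mat_opnorm_theta_alpha:
  assumes "T f \<in> carrier_mat n n" "T (\<alpha> f) \<in> carrier_mat n n"
  shows "mat_opnorm (theta_alpha T \<alpha> f) = mat_opnorm (T f + mat_adjoint (T (\<alpha> f))) / 2"
  unfolding theta_alpha_def using assms mat_adjoint_carrier[OF assms(2)]
  by (simp add: mat_opnorm_smult[of _ n n])

lemma mat_opnorm_theta_alpha_le:
  assumes T: "is_linear_map A n T" and \<alpha>: "antilinear_contraction X A \<alpha>" and f: "f \<in> A"
  shows "mat_opnorm (theta_alpha T \<alpha> f) \<le> (mat_opnorm (T f) + mat_opnorm (T (\<alpha> f))) / 2"
proof -
  have Tf: "T f \<in> carrier_mat n n" and T\<alpha>f: "T (\<alpha> f) \<in> carrier_mat n n"
    using is_linear_map_carrier[OF T] f antilinear_contraction_closed[OF \<alpha> f] by auto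
  have "mat_opnorm (T f + mat_adjoint (T (\<alpha> f))) \<le> mat_opnorm (T f) + mat_opnorm (mat_adjoint (T (\<alpha> f)))"
    using Tf T\<alpha>f mat_adjoint_carrier[OF T\<alpha>f] by (intro mat_opnorm_add_le) auto
  then show ?thesis
    using Tf T\<alpha>f by (simp add: mat_opnorm_theta_alpha mat_opnorm_adjoint)
qed

lemma bdd_above_map_norm_theta_alpha:
  assumes T: "is_linear_map A n T" and \<alpha>: "antilinear_contraction X A \<alpha>"
    and bdd: "bdd_above {mat_opnorm (T f) | f. f \<in> A \<and> supnorm X f \<le> 1}"
  shows "bdd_above {mat_opnorm (theta_alpha T \<alpha> f) | f. f \<in> A \<and> supnorm X f \<le> 1}"
proof -
  obtain B where B: "\<And>f. f \<in> A \<Longrightarrow> supnorm X f \<le> 1 \<Longrightarrow> mat_opnorm (T f) \<le> B"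
    using bdd unfolding bdd_above_def by blast
  have "mat_opnorm (theta_alpha T \<alpha> f) \<le> B" if "f \<in> A" "supnorm X f \<le> 1" for f
    using mat_opnorm_theta_alpha_le[OF T \<alpha> that(1)] B[OF that] B[of "\<alpha> f"]
      antilinear_contraction_closed[OF \<alpha> that(1)] antilinear_contraction_supnorm_le[OF \<alpha> that(1)] that(2)
    by fastforce
  then show ?thesis
    by (intro bdd_aboveI[of _ B]) blast
qed

lemma map_norm_nonneg:
  assumes "uniform_algebra X A" "bdd_above {mat_opnorm (T f) | f. f \<in> A \<and> supnorm X f \<le> 1}"
  shows "0 \<le> map_norm X A T"
proof -
  have "supnorm X (\<lambda>x. 0) \<le> 1"
    by (rule supnorm_le) simp_all
  then show ?thesis
    using mat_opnorm_le_map_norm[OF assms(2) uniform_algebra_zero[OF assms(1)]]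
      order_trans[OF mat_opnorm_nonneg] by blast
qed

lemma map_norm_pow_le:
  assumes A: "uniform_algebra X A" and "0 < k" "0 \<le> map_norm X A T"
    and bound: "\<And>f. f \<in> A \<Longrightarrow> supnorm X f \<le> 1 \<Longrightarrow> mat_opnorm (T f) ^ k \<le> K"
  shows "map_norm X A T ^ k \<le> K"
proof -
  have "mat_opnorm (T f) \<le> root k K" if "f \<in> A" "supnorm X f \<le> 1" for f
  proof -
    have "mat_opnorm (T f) = root k (mat_opnorm (T f) ^ k)"
      using \<open>0 < k\<close> by (simp add: real_root_pos2)
    also have "\<dots> \<le> root k K"
      using bound[OF that] \<open>0 < k\<close> by (rule real_root_le_mono[rotated])
    finally show ?thesis .
  qed
  then have "map_norm X A T \<le> root k K"
    by (rule map_norm_le[OF A])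
  moreover have "supnorm X (\<lambda>x. 0) \<le> 1"
    by (rule supnorm_le) simp_all
  then have "0 \<le> K"
    using bound[OF uniform_algebra_zero[OF A]] order_trans[OF zero_le_power[OF mat_opnorm_nonneg]] by blast
  ultimately show ?thesis
    using assms(2,3) by (metis power_mono real_root_pow_pos2)
qed

lemma mat_opnorm_pow4_le_map_norm:
  assumes A: "uniform_algebra X A" and hom: "is_unital_hom X A n \<theta>" and \<alpha>: "antilinear_contraction X A \<alpha>"
    and bdd: "bdd_above {mat_opnorm (\<theta> f) | f. f \<in> A \<and> supnorm X f \<le> 1}"
    and sym: "map_norm X A (theta_alpha \<theta> \<alpha>) \<le> 1"
    and f: "f \<in> A" "supnorm X f \<le> 1"
  shows "mat_opnorm (\<theta> f) ^ 4 \<le> 2 * map_norm X A \<theta> ^ 3 + (map_norm X A \<theta>)\<^sup>2"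
proof -
  have lin: "is_linear_map A n \<theta>"
    and mult: "\<And>f g. f \<in> A \<Longrightarrow> g \<in> A \<Longrightarrow> \<theta> (\<lambda>x. f x * g x) = \<theta> f * \<theta> g"
    using hom unfolding is_unital_hom_def by auto
  define M where "M = map_norm X A \<theta>"
  have M: "mat_opnorm (\<theta> g) \<le> M" if "g \<in> A" "supnorm X g \<le> 1" for g
    unfolding M_def using bdd that by (rule mat_opnorm_le_map_norm)
  have \<alpha>f: "\<alpha> f \<in> A" "supnorm X (\<alpha> f) \<le> 1"
    using antilinear_contraction_closed[OF \<alpha> f(1)] antilinear_contraction_supnorm_le[OF \<alpha> f(1)] f(2)
    by auto
  define h where "h = (\<lambda>x. f x * \<alpha> f x * f x)"
  have h: "h \<in> A" "supnorm X h \<le> 1"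
    unfolding h_def using f \<alpha>f
    by (simp_all add: uniform_algebra_mult[OF A] uniform_algebra_supnorm_mult_le_one[OF A])
  have \<theta>h: "\<theta> h = \<theta> f * \<theta> (\<alpha> f) * \<theta> f"
    unfolding h_def using f \<alpha>f by (simp add: mult uniform_algebra_mult[OF A])
  have "2 * mat_opnorm (theta_alpha \<theta> \<alpha> f) \<le> 2"
    using mat_opnorm_le_map_norm[OF bdd_above_map_norm_theta_alpha[OF lin \<alpha> bdd] f] sym by simp
  then have S: "mat_opnorm (\<theta> f + mat_adjoint (\<theta> (\<alpha> f))) \<le> 2"
    using mat_opnorm_theta_alpha[of \<theta> f n \<alpha>, OF is_linear_map_carrier[OF lin f(1)] is_linear_map_carrier[OF lin \<alpha>f(1)]]
    by simp
  have "mat_opnorm (\<theta> f) ^ 4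
      \<le> mat_opnorm (\<theta> f) ^ 3 * mat_opnorm (\<theta> f + mat_adjoint (\<theta> (\<alpha> f))) + mat_opnorm (\<theta> f) * mat_opnorm (\<theta> h)"
    unfolding \<theta>h using is_linear_map_carrier[OF lin] f \<alpha>f by (intro mat_opnorm_pow4_le_sym) auto
  also have "\<dots> \<le> M ^ 3 * 2 + M * M"
    using M[OF f] M[OF h] S order_trans[OF mat_opnorm_nonneg M[OF f]]
    by (intro add_mono mult_mono power_mono) auto
  finally show ?thesis
    unfolding M_def by (simp add: power2_eq_square mult.commute)
qed

lemma le_one_plus_sqrt2_if_pow4_le:
  fixes M :: real
  assumes "0 \<le> M" "M ^ 4 \<le> 2 * M ^ 3 + M\<^sup>2"
  shows "M \<le> 1 + sqrt 2"
proof (cases "M = 0")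
  case False
  then have "M\<^sup>2 * M\<^sup>2 \<le> M\<^sup>2 * (2 * M + 1)"
    using assms(2) by (simp add: power2_eq_square power3_eq_cube power4_eq_xxxx algebra_simps)
  moreover have "0 < M\<^sup>2"
    using False by simp
  ultimately have "M\<^sup>2 \<le> 2 * M + 1"
    by (rule mult_left_le_imp_le)
  then have "(M - 1)\<^sup>2 \<le> 2"
    by (simp add: power2_eq_square algebra_simps)
  then show ?thesis
    using real_le_rsqrt by fastforce
qed simp

theorem map_norm_le_one_plus_sqrt2:
  assumes A: "uniform_algebra X A" and hom: "is_unital_hom X A n \<theta>"
    and cont: "is_continuous_map X A \<theta>" and \<alpha>: "antilinear_contraction X A \<alpha>"
    and sym: "map_norm X A (theta_alpha \<theta> \<alpha>) \<le> 1"
  shows "map_norm X A \<theta> \<le> 1 + sqrt 2"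
proof -
  have "is_linear_map A n \<theta>"
    using hom unfolding is_unital_hom_def by blast
  then have bdd: "bdd_above {mat_opnorm (\<theta> f) | f. f \<in> A \<and> supnorm X f \<le> 1}"
    by (rule bdd_above_map_norm[OF A _ cont])
  have M0: "0 \<le> map_norm X A \<theta>"
    by (rule map_norm_nonneg[OF A bdd])
  have "map_norm X A \<theta> ^ 4 \<le> 2 * map_norm X A \<theta> ^ 3 + (map_norm X A \<theta>)\<^sup>2"
    by (rule map_norm_pow_le[OF A _ M0]) (simp_all add: mat_opnorm_pow4_le_map_norm[OF A hom \<alpha> bdd sym])
  then show ?thesis
    by (rule le_one_plus_sqrt2_if_pow4_le[OF M0])
qed

section \<open>Sharpness\<close>

lemma mat2_eqI:
  fixes A B :: "complex mat"
  assumes "A \<in> carrier_mat 2 2" "B \<in> carrier_mat 2 2"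
    "A $$ (0,0) = B $$ (0,0)" "A $$ (0,1) = B $$ (0,1)" "A $$ (1,0) = B $$ (1,0)" "A $$ (1,1) = B $$ (1,1)"
  shows "A = B"
proof (rule eq_matI)
  fix i j assume "i < dim_row B" "j < dim_col B"
  then have "i = 0 \<or> i = 1" "j = 0 \<or> j = 1" using assms by auto
  then show "A $$ (i,j) = B $$ (i,j)" using assms by auto
qed (use assms in auto)

lemma mat_opnorm_skew_2x2_le:
  "mat_opnorm (mat 2 2 (\<lambda>(i,j). if i = j then 0 else if i = 0 then d else - d)) \<le> cmod d"
proof (rule mat_opnorm_le)
  fix v :: "complex vec"
  assume "v \<in> carrier_vec (dim_col (mat 2 2 (\<lambda>(i,j). if i = j then 0 else if i = 0 then d else - d)))"
  then have v: "v \<in> carrier_vec 2" by simp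
  have "mat 2 2 (\<lambda>(i,j). if i = j then 0 else if i = 0 then d else - d) *\<^sub>v v
      = vec 2 (\<lambda>i. if i = 0 then d * v $ 1 else - d * v $ 0)"
    using v by (intro eq_vecI) (auto simp: scalar_prod_def numeral_2_eq_2)
  then have "cvec_norm (mat 2 2 (\<lambda>(i,j). if i = j then 0 else if i = 0 then d else - d) *\<^sub>v v)
      = sqrt ((cmod d)\<^sup>2 * ((cmod (v $ 0))\<^sup>2 + (cmod (v $ 1))\<^sup>2))"
    by (simp add: cvec_norm_dim2 norm_mult power_mult_distrib algebra_simps)
  also have "\<dots> = cmod d * cvec_norm v"
    using v by (simp add: cvec_norm_dim2 real_sqrt_mult)
  finally show "cvec_norm (mat 2 2 (\<lambda>(i,j). if i = j then 0 else if i = 0 then d else - d) *\<^sub>v v)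
      \<le> cmod d * cvec_norm v"
    by simp
qed simp

text \<open>\<open>(1, 1 + \<surd>2)\<close> is an eigenvector of \<open>M\<^sup>*M\<close> for its largest eigenvalue \<open>(1 + \<surd>2)\<^sup>2\<close>.\<close>

lemma one_plus_sqrt2_le_mat_opnorm:
  "1 + sqrt 2 \<le> mat_opnorm (mat 2 2 (\<lambda>(i,j). if i = 0 then (if j = 0 then 1 else 2) else (if j = 0 then 0 else -1)))"
  (is "_ \<le> mat_opnorm ?M")
proof -
  define r where "r = 1 + sqrt 2"
  have r: "0 < r" unfolding r_def by (simp add: add_pos_nonneg)
  define v where "v = vec 2 (\<lambda>i. if i = 0 then 1 else complex_of_real r)"
  have v: "v \<in> carrier_vec 2" unfolding v_def by simp
  have nv: "cvec_norm v = sqrt (1 + r\<^sup>2)"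
    unfolding cvec_norm_dim2[OF v] using r by (simp add: v_def)
  have "?M *\<^sub>v v = vec 2 (\<lambda>i. if i = 0 then complex_of_real (1 + 2 * r) else - complex_of_real r)"
    by (intro eq_vecI) (auto simp: v_def scalar_prod_def numeral_2_eq_2)
  then have "cvec_norm (?M *\<^sub>v v) = sqrt ((1 + 2 * r)\<^sup>2 + r\<^sup>2)"
    using r by (simp add: cvec_norm_dim2 del: of_real_add of_real_mult)
  also have "(1 + 2 * r)\<^sup>2 + r\<^sup>2 = r\<^sup>2 * (1 + r\<^sup>2)"
    unfolding r_def power2_eq_square by (simp add: algebra_simps)
  finally have "cvec_norm (?M *\<^sub>v v) = r * cvec_norm v"
    using r nv by (simp add: real_sqrt_mult)
  moreover have "cvec_norm (?M *\<^sub>v v) \<le> mat_opnorm ?M * cvec_norm v"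
    using v by (intro cvec_norm_mult_mat_vec_le) simp
  moreover have "0 < cvec_norm v"
    unfolding nv by (simp add: add_pos_nonneg)
  ultimately show ?thesis
    unfolding r_def by simp
qed

definition vanishing_off :: "'a set \<Rightarrow> ('a \<Rightarrow> complex) set" where
  "vanishing_off X = {f. \<forall>x. x \<notin> X \<longrightarrow> f x = 0}"

lemma uniform_algebra_vanishing_off:
  fixes X :: "'a::t2_space set"
  assumes "finite X"
  shows "uniform_algebra X (vanishing_off X)"
  using assms unfolding uniform_algebra_def vanishing_off_def const_on_def
  by (auto simp: finite_imp_compact continuous_on_finite)

lemma norm_le_supnorm_finite: "finite X \<Longrightarrow> x \<in> X \<Longrightarrow> cmod (f x) \<le> supnorm X f"
  by (rule norm_le_supnorm[OF bdd_above_finite]) auto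

definition neg_conj :: "('a \<Rightarrow> complex) \<Rightarrow> 'a \<Rightarrow> complex" where
  "neg_conj f = (\<lambda>x. - cnj (f x))"

lemma antilinear_contraction_neg_conj: "antilinear_contraction X (vanishing_off X) neg_conj"
  unfolding antilinear_contraction_def vanishing_off_def neg_conj_def supnorm_def
  by (simp add: fun_eq_iff algebra_simps)

text \<open>The diagonal representation \<open>f \<mapsto> diag (f a, f b)\<close> conjugated by \<open>[[1, -1], [0, 1]]\<close>.\<close>

definition tri_hom :: "'a \<Rightarrow> 'a \<Rightarrow> ('a \<Rightarrow> complex) \<Rightarrow> complex mat" where
  "tri_hom a b f = mat 2 2 (\<lambda>(i,j). if i = 0 then (if j = 0 then f a else f a - f b) else (if j = 0 then 0 else f b))"

lemma tri_hom_carrier [simp]: "tri_hom a b f \<in> carrier_mat 2 2"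
  by (simp add: tri_hom_def)

lemma is_unital_hom_tri_hom: "is_unital_hom {a, b} (vanishing_off {a, b}) 2 (tri_hom a b)"
  unfolding is_unital_hom_def is_linear_map_def
proof (intro conjI ballI allI)
  fix c f g
  show "tri_hom a b (\<lambda>x. c * f x + g x) = c \<cdot>\<^sub>m tri_hom a b f + tri_hom a b g"
    by (rule mat2_eqI) (simp_all add: tri_hom_def algebra_simps)
  show "tri_hom a b (\<lambda>x. f x * g x) = tri_hom a b f * tri_hom a b g"
    by (rule mat2_eqI)
      (simp_all add: mult_carrier_mat[OF tri_hom_carrier tri_hom_carrier],
       simp_all add: tri_hom_def scalar_prod_def numeral_2_eq_2 algebra_simps)
next
  show "tri_hom a b (const_on {a, b} 1) = 1\<^sub>m 2"
    by (rule mat2_eqI) (simp_all add: tri_hom_def const_on_def)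
qed simp

lemma is_continuous_map_tri_hom: "is_continuous_map {a, b} (vanishing_off {a, b}) (tri_hom a b)"
proof (rule is_continuous_mapI_lipschitz)
  fix f g :: "'a \<Rightarrow> complex"
  define s where "s = supnorm {a, b} (\<lambda>x. g x - f x)"
  have a: "cmod (g a - f a) \<le> s" and b: "cmod (g b - f b) \<le> s"
    unfolding s_def by (auto intro: norm_le_supnorm_finite)
  have "tri_hom a b g - tri_hom a b f = tri_hom a b (\<lambda>x. g x - f x)"
    by (rule mat2_eqI) (simp_all add: minus_carrier_mat[OF tri_hom_carrier], simp_all add: tri_hom_def)
  then have "mat_opnorm (tri_hom a b g - tri_hom a b f)
      \<le> cmod (g a - f a) + cmod (g a - f a - (g b - f b)) + cmod (g b - f b)"
    using cvec_norm_mult_mat_vec_le_entry_sum[OF tri_hom_carrier]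
    by (auto simp: numeral_2_eq_2 tri_hom_def intro!: mat_opnorm_le)
  also have "\<dots> \<le> 4 * s"
    using a b norm_triangle_ineq4[of "g a - f a" "g b - f b"] by linarith
  finally show "mat_opnorm (tri_hom a b g - tri_hom a b f) \<le> 4 * s" .
qed

lemma theta_alpha_tri_hom:
  "theta_alpha (tri_hom a b) neg_conj f
    = mat 2 2 (\<lambda>(i,j). if i = j then 0 else if i = 0 then (f a - f b) / 2 else - ((f a - f b) / 2))"
  by (rule mat2_eqI) (simp_all add: theta_alpha_def tri_hom_def neg_conj_def mat_adjoint_carrier field_simps)

lemma map_norm_theta_alpha_tri_hom_le:
  fixes a b :: "'a::t2_space"
  shows "map_norm {a, b} (vanishing_off {a, b}) (theta_alpha (tri_hom a b) neg_conj) \<le> 1"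
proof (rule map_norm_le[OF uniform_algebra_vanishing_off])
  fix f assume "supnorm {a, b} f \<le> 1"
  then have "cmod (f a) \<le> 1" "cmod (f b) \<le> 1"
    using norm_le_supnorm_finite[of "{a, b}" _ f] by fastforce+
  then have "cmod ((f a - f b) / 2) \<le> 1"
    using norm_triangle_ineq4[of "f a" "f b"] by (simp add: norm_divide)
  then show "mat_opnorm (theta_alpha (tri_hom a b) neg_conj f) \<le> 1"
    unfolding theta_alpha_tri_hom using mat_opnorm_skew_2x2_le order_trans by blast
qed simp

lemma one_plus_sqrt2_le_map_norm_tri_hom:
  fixes a b :: "'a::t2_space"
  assumes "a \<noteq> b"
  shows "1 + sqrt 2 \<le> map_norm {a, b} (vanishing_off {a, b}) (tri_hom a b)"
proof -
  define f :: "'a \<Rightarrow> complex" where "f x = (if x = a then 1 else if x = b then -1 else 0)" for x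
  have f: "f \<in> vanishing_off {a, b}" "supnorm {a, b} f \<le> 1"
    unfolding f_def vanishing_off_def by (auto intro: supnorm_le)
  have "tri_hom a b f
      = mat 2 2 (\<lambda>(i,j). if i = 0 then (if j = 0 then 1 else 2) else (if j = 0 then 0 else -1))"
    using assms by (intro mat2_eqI) (simp_all add: tri_hom_def f_def)
  then have "1 + sqrt 2 \<le> mat_opnorm (tri_hom a b f)"
    using one_plus_sqrt2_le_mat_opnorm by simp
  also have "\<dots> \<le> map_norm {a, b} (vanishing_off {a, b}) (tri_hom a b)"
  proof (rule mat_opnorm_le_map_norm[OF bdd_above_map_norm f])
    show "uniform_algebra {a, b} (vanishing_off {a, b})"
      by (rule uniform_algebra_vanishing_off) simp
    show "is_linear_map (vanishing_off {a, b}) 2 (tri_hom a b)"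
      using is_unital_hom_tri_hom[of a b] unfolding is_unital_hom_def by (rule conjunct1)
  qed (rule is_continuous_map_tri_hom)
  finally show ?thesis .
qed

theorem theorem1p1:
  shows "(\<forall>(X :: 'a::t2_space set) A n \<theta> \<alpha>.
            uniform_algebra X A \<and> is_unital_hom X A n \<theta> \<and> is_continuous_map X A \<theta> \<and>
            antilinear_contraction X A \<alpha> \<and> map_norm X A (theta_alpha \<theta> \<alpha>) \<le> 1
            \<longrightarrow> map_norm X A \<theta> \<le> 1 + sqrt 2)
       \<and> (\<forall>c < 1 + sqrt 2. \<exists>(X :: (nat \<Rightarrow> real) set) A n \<theta> \<alpha>.
            uniform_algebra X A \<and> is_unital_hom X A n \<theta> \<and> is_continuous_map X A \<theta> \<and>
            antilinear_contraction X A \<alpha> \<and> map_norm X A (theta_alpha \<theta> \<alpha>) \<le> 1 \<and>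
            map_norm X A \<theta> > c)"
proof (intro conjI allI impI)
  fix X :: "'a::t2_space set" and A n \<theta> \<alpha>
  assume "uniform_algebra X A \<and> is_unital_hom X A n \<theta> \<and> is_continuous_map X A \<theta> \<and>
    antilinear_contraction X A \<alpha> \<and> map_norm X A (theta_alpha \<theta> \<alpha>) \<le> 1"
  then show "map_norm X A \<theta> \<le> 1 + sqrt 2"
    using map_norm_le_one_plus_sqrt2 by blast
next
  fix c :: real
  assume c: "c < 1 + sqrt 2"
  define a b :: "nat \<Rightarrow> real" where "a = (\<lambda>_. 0)" and "b = (\<lambda>_. 1)"
  have "a \<noteq> b"
    unfolding a_def b_def by (metis zero_neq_one)
  then have "c < map_norm {a, b} (vanishing_off {a, b}) (tri_hom a b)"
    using one_plus_sqrt2_le_map_norm_tri_hom c by (meson less_le_trans)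
  moreover have "uniform_algebra {a, b} (vanishing_off {a, b})"
    by (rule uniform_algebra_vanishing_off) simp
  ultimately show "\<exists>(X :: (nat \<Rightarrow> real) set) A n \<theta> \<alpha>.
      uniform_algebra X A \<and> is_unital_hom X A n \<theta> \<and> is_continuous_map X A \<theta> \<and>
      antilinear_contraction X A \<alpha> \<and> map_norm X A (theta_alpha \<theta> \<alpha>) \<le> 1 \<and> map_norm X A \<theta> > c"
    using is_unital_hom_tri_hom[of a b] is_continuous_map_tri_hom[of a b]
      antilinear_contraction_neg_conj[of "{a, b}"] map_norm_theta_alpha_tri_hom_le[of a b] by blast
qed

end
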